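(* Let $N\ge1$, $D>0$ a fundamental discriminant with $D\equiv1\pmod{4N}$, $Q=[Na,b,c]\in\mathcal{Q}_{N,D,1}$, $d$ a positive divisor of $N$, and $Q^{(d)}:=[\frac{N}{d}a,b,cd]\in\mathcal{Q}_{N/d,D,1}$. Then the map $(u,v)\mapsto(u,dv)$ induces a bijection between $$\{(u,v)\in\mathbb{Z}^2/\Gamma_0^0(N/d,d)_{Q^{(d)}}:\ Q^{(d)}(u,v)>0,\ \gcd(v,N/d)=1\}$$ and $$\{(u,v)\in\mathbb{Z}^2/\Gamma_0(N)_Q:\ Q(u,v)>0,\ \gcd(v,N)=d\}.$$
   Context: $[a,b,c]=ax^2+bxy+cy^2$; $\mathcal{Q}_{M,D,1}:=\{[Ma,b,c]:a,b,c\in\mathbb{Z},\ b^2-4Mac=D,\ b\equiv1\pmod{2M}\}$. $\Gamma_0^0(N/d,d):=\{\begin{pmatrix}\alpha&\beta\\\gamma&\delta\end{pmatrix}\in\Gamma_0(N/d):\beta\equiv0\pmod d\}$. For a group $G$ of integer matrices of determinant $1$ and a form $P$, $G_P=\{M\in G:P\circ M=P\}$ with $(P\circ M)(x,y)=P(\alpha x+\beta y,\gamma x+\delta y)$, acting on column vectors $(u,v)^T\in\mathbb{Z}^2$ by left multiplication; $\mathbb{Z}^2/G_P$ denotes the orbit set. *)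

theory Defs
  imports "HOL-Computational_Algebra.Squarefree"
begin

type_synonym qform = "int \<times> int \<times> int"
text \<open>Integer 2x2 matrices (alpha, beta, gamma, delta) = [[alpha, beta],[gamma, delta]].\<close>
type_synonym mat2 = "int \<times> int \<times> int \<times> int"

definition qeval :: "qform \<Rightarrow> int \<Rightarrow> int \<Rightarrow> int" where
  "qeval P x y = (case P of (a, b, c) \<Rightarrow> a * x^2 + b * x * y + c * y^2)"

definition mat_vec :: "mat2 \<Rightarrow> int \<times> int \<Rightarrow> int \<times> int" where
  "mat_vec M w = (case M of (\<alpha>, \<beta>, \<gamma>, \<delta>) \<Rightarrow> case w of (u, v) \<Rightarrow>
      (\<alpha> * u + \<beta> * v, \<gamma> * u + \<delta> * v))"

definition mdet :: "mat2 \<Rightarrow> int" where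
  "mdet M = (case M of (\<alpha>, \<beta>, \<gamma>, \<delta>) \<Rightarrow> \<alpha> * \<delta> - \<beta> * \<gamma>)"

definition form_act :: "qform \<Rightarrow> mat2 \<Rightarrow> int \<Rightarrow> int \<Rightarrow> int" where
  "form_act P M x y = (case mat_vec M (x, y) of (x', y') \<Rightarrow> qeval P x' y')"

definition Gamma0 :: "int \<Rightarrow> mat2 set" where
  "Gamma0 N = {M. mdet M = 1 \<and> (case M of (\<alpha>, \<beta>, \<gamma>, \<delta>) \<Rightarrow> N dvd \<gamma>)}"

definition Gamma00 :: "int \<Rightarrow> int \<Rightarrow> mat2 set" where
  "Gamma00 M' d = {M \<in> Gamma0 M'. (case M of (\<alpha>, \<beta>, \<gamma>, \<delta>) \<Rightarrow> d dvd \<beta>)}"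

definition stab :: "mat2 set \<Rightarrow> qform \<Rightarrow> mat2 set" where
  "stab G P = {M \<in> G. form_act P M = qeval P}"

definition orbit :: "mat2 set \<Rightarrow> int \<times> int \<Rightarrow> (int \<times> int) set" where
  "orbit H w = (\<lambda>M. mat_vec M w) ` H"

definition fundamental_discriminant :: "int \<Rightarrow> bool" where
  "fundamental_discriminant D \<longleftrightarrow> D \<noteq> 1 \<and>
     ((D mod 4 = 1 \<and> squarefree D) \<or>
      (\<exists>m. D = 4 * m \<and> (m mod 4 = 2 \<or> m mod 4 = 3) \<and> squarefree m))"

definition QMD1 :: "int \<Rightarrow> int \<Rightarrow> qform set" where
  "QMD1 M D = {(M * a, b, c) | a b c. b^2 - 4 * M * a * c = D \<and> b mod (2 * M) = 1 mod (2 * M)}"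

end

theory Submission
  imports Defs
begin

text \<open>
  With \<open>D = diag(1, d)\<close> one has \<open>Q(u, d v) = d Q\<^sub>d(u, v)\<close>, and conjugation
  \<open>M \<mapsto> D M D\<inverse>\<close> maps \<open>\<Gamma>\<^sub>0\<^sup>0(N/d, d)\<close> into \<open>\<Gamma>\<^sub>0(N)\<close>, carrying the stabiliser of \<open>Q\<^sub>d\<close> onto
  that of \<open>Q\<close>. Hence \<open>w \<mapsto> D w\<close> maps orbits onto orbits, and it maps the vectors with
  \<open>Q\<^sub>d > 0\<close>, \<open>gcd(v, N/d) = 1\<close> exactly onto those with \<open>Q > 0\<close>, \<open>gcd(v, N) = d\<close>.
\<close>

definition mat_mul :: "mat2 \<Rightarrow> mat2 \<Rightarrow> mat2" where
  "mat_mul M M' = (case M of (\<alpha>, \<beta>, \<gamma>, \<delta>) \<Rightarrow> case M' of (\<alpha>', \<beta>', \<gamma>', \<delta>') \<Rightarrow>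
     (\<alpha> * \<alpha>' + \<beta> * \<gamma>', \<alpha> * \<beta>' + \<beta> * \<delta>', \<gamma> * \<alpha>' + \<delta> * \<gamma>', \<gamma> * \<beta>' + \<delta> * \<delta>'))"

definition mat_adj :: "mat2 \<Rightarrow> mat2" where
  "mat_adj M = (case M of (\<alpha>, \<beta>, \<gamma>, \<delta>) \<Rightarrow> (\<delta>, - \<beta>, - \<gamma>, \<alpha>))"

definition mat_subgroup :: "mat2 set \<Rightarrow> bool" where
  "mat_subgroup G \<longleftrightarrow> (1, 0, 0, 1) \<in> G \<and> (\<forall>M\<in>G. mdet M = 1 \<and> mat_adj M \<in> G)
     \<and> (\<forall>M\<in>G. \<forall>M'\<in>G. mat_mul M M' \<in> G)"

lemma mat_vec_id [simp]: "mat_vec (1, 0, 0, 1) w = w"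
  by (cases w) (simp add: mat_vec_def)

lemma mat_vec_mul: "mat_vec (mat_mul M M') w = mat_vec M (mat_vec M' w)"
  by (cases M; cases M'; cases w) (simp add: mat_mul_def mat_vec_def algebra_simps)

lemma mdet_mul: "mdet (mat_mul M M') = mdet M * mdet M'"
  by (cases M; cases M') (simp add: mat_mul_def mdet_def algebra_simps)

lemma mdet_adj [simp]: "mdet (mat_adj M) = mdet M"
  by (cases M) (simp add: mat_adj_def mdet_def algebra_simps)

lemma mat_adj_adj [simp]: "mat_adj (mat_adj M) = M"
  by (cases M) (simp add: mat_adj_def)

lemma mat_vec_adj_left:
  assumes "mdet M = 1"
  shows "mat_vec (mat_adj M) (mat_vec M w) = w"
proof -
  obtain \<alpha> \<beta> \<gamma> \<delta> where M: "M = (\<alpha>, \<beta>, \<gamma>, \<delta>)" by (cases M) auto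
  obtain u v where w: "w = (u, v)" by (cases w) auto
  have "\<alpha> * \<delta> - \<beta> * \<gamma> = 1" using assms by (simp add: M mdet_def)
  moreover have "\<delta> * (\<alpha> * u + \<beta> * v) - \<beta> * (\<gamma> * u + \<delta> * v) = (\<alpha> * \<delta> - \<beta> * \<gamma>) * u"
    and "\<alpha> * (\<gamma> * u + \<delta> * v) - \<gamma> * (\<alpha> * u + \<beta> * v) = (\<alpha> * \<delta> - \<beta> * \<gamma>) * v"
    by (simp_all add: algebra_simps)
  ultimately show ?thesis by (simp add: M w mat_adj_def mat_vec_def)
qed

lemma mat_vec_adj_right:
  assumes "mdet M = 1"
  shows "mat_vec M (mat_vec (mat_adj M) w) = w"
  using mat_vec_adj_left[of "mat_adj M" w] assms by simp

lemma mat_subgroup_Gamma00: "mat_subgroup (Gamma00 k d)"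
proof -
  have "mat_mul M M' \<in> Gamma00 k d" if "M \<in> Gamma00 k d" "M' \<in> Gamma00 k d" for M M'
  proof -
    obtain \<alpha> \<beta> \<gamma> \<delta> where M: "M = (\<alpha>, \<beta>, \<gamma>, \<delta>)" by (cases M) auto
    obtain \<alpha>' \<beta>' \<gamma>' \<delta>' where M': "M' = (\<alpha>', \<beta>', \<gamma>', \<delta>')" by (cases M') auto
    have "mdet M = 1" "k dvd \<gamma>" "d dvd \<beta>" "mdet M' = 1" "k dvd \<gamma>'" "d dvd \<beta>'"
      using that by (auto simp: M M' Gamma00_def Gamma0_def)
    moreover have "mdet (mat_mul M M') = 1" using calculation by (simp add: mdet_mul)
    ultimately show ?thesis by (simp add: M M' mat_mul_def Gamma00_def Gamma0_def)
  qed
  then show ?thesis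
    by (auto simp: mat_subgroup_def Gamma00_def Gamma0_def mat_adj_def mdet_def mult.commute split: prod.splits)
qed

lemma form_act_eq_iff:
  "form_act P M = qeval P \<longleftrightarrow> (\<forall>w. case_prod (qeval P) (mat_vec M w) = case_prod (qeval P) w)"
  by (auto simp: fun_eq_iff form_act_def split: prod.splits)

lemma mat_subgroup_stab:
  assumes "mat_subgroup G"
  shows "mat_subgroup (stab G P)"
proof -
  let ?P = "case_prod (qeval P)"
  have mul: "?P (mat_vec (mat_mul M M') w) = ?P w"
    if "\<forall>w. ?P (mat_vec M w) = ?P w" "\<forall>w. ?P (mat_vec M' w) = ?P w" for M M' w
    using that(1)[rule_format, of "mat_vec M' w"] that(2)[rule_format, of w]
    by (simp only: mat_vec_mul)
  have adj: "?P (mat_vec (mat_adj M) w) = ?P w"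
    if "mdet M = 1" "\<forall>w. ?P (mat_vec M w) = ?P w" for M w
    using that(2)[rule_format, of "mat_vec (mat_adj M) w"] by (simp add: mat_vec_adj_right[OF that(1)])
  show ?thesis
    using assms mul adj unfolding mat_subgroup_def stab_def form_act_eq_iff by auto
qed

lemma orbit_refl:
  assumes "mat_subgroup H"
  shows "x \<in> orbit H x"
  using assms mat_vec_id[of x] unfolding mat_subgroup_def orbit_def by (metis image_eqI)

lemma orbit_eq:
  assumes H: "mat_subgroup H" and "y \<in> orbit H x"
  shows "orbit H y = orbit H x"
proof -
  obtain M where M: "M \<in> H" "y = mat_vec M x" using assms(2) unfolding orbit_def by auto
  have x: "x = mat_vec (mat_adj M) y" using M H mat_vec_adj_left unfolding mat_subgroup_def by metis
  have "orbit H y \<subseteq> orbit H x" if "M \<in> H" "y = mat_vec M x" for M x y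
  proof
    fix z assume "z \<in> orbit H y"
    then obtain M' where "M' \<in> H" "z = mat_vec M' y" unfolding orbit_def by auto
    then have "mat_mul M' M \<in> H" "z = mat_vec (mat_mul M' M) x"
      using that H by (auto simp: mat_subgroup_def mat_vec_mul)
    then show "z \<in> orbit H x" unfolding orbit_def by auto
  qed
  moreover have "mat_adj M \<in> H" using M H unfolding mat_subgroup_def by auto
  ultimately show ?thesis using M x by blast
qed

lemma bij_betw_orbit_classes:
  fixes \<phi> :: "int \<times> int \<Rightarrow> int \<times> int"
  assumes H1: "mat_subgroup H1" and "inj \<phi>"
    and orbit_image: "\<And>w. orbit H2 (\<phi> w) = \<phi> ` orbit H1 w"
    and A2: "A2 = \<phi> ` A1"
  shows "(\<forall>x\<in>A1. \<forall>y\<in>A1. orbit H1 x = orbit H1 y \<longrightarrow> orbit H2 (\<phi> x) = orbit H2 (\<phi> y))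
    \<and> bij_betw (\<lambda>Orb. orbit H2 (\<phi> (SOME x. x \<in> Orb))) (orbit H1 ` A1) (orbit H2 ` A2)"
proof -
  have some_orbit: "orbit H1 (SOME y. y \<in> orbit H1 x) = orbit H1 x" for x
    using someI[of "\<lambda>y. y \<in> orbit H1 x", OF orbit_refl[OF H1]] orbit_eq[OF H1] by blast
  have class_map: "orbit H2 (\<phi> (SOME y. y \<in> orbit H1 x)) = \<phi> ` orbit H1 x" for x
    by (simp only: orbit_image some_orbit)
  have "inj_on (\<lambda>Orb. orbit H2 (\<phi> (SOME x. x \<in> Orb))) (orbit H1 ` A1)"
    using \<open>inj \<phi>\<close> by (auto intro!: inj_onI simp: class_map inj_image_eq_iff)
  moreover have "(\<lambda>Orb. orbit H2 (\<phi> (SOME x. x \<in> Orb))) ` orbit H1 ` A1 = orbit H2 ` A2"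
    by (simp add: A2 image_image orbit_image some_orbit)
  ultimately show ?thesis using orbit_image unfolding bij_betw_def by auto
qed

text \<open>Conjugation by \<open>diag(1, d)\<close>: \<open>diag(1, d) M diag(1, d)\<inverse>\<close>, integral when \<open>d\<close> divides \<open>\<beta>\<close>.\<close>
definition conj_diag :: "int \<Rightarrow> mat2 \<Rightarrow> mat2" where
  "conj_diag d M = (case M of (\<alpha>, \<beta>, \<gamma>, \<delta>) \<Rightarrow> (\<alpha>, \<beta> div d, d * \<gamma>, \<delta>))"

lemma mat_vec_conj_diag:
  assumes "d dvd \<beta>"
  shows "mat_vec (conj_diag d (\<alpha>, \<beta>, \<gamma>, \<delta>)) (u, d * v)
    = (\<lambda>(u, v). (u, d * v)) (mat_vec (\<alpha>, \<beta>, \<gamma>, \<delta>) (u, v))"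
  using assms by (auto simp: conj_diag_def mat_vec_def algebra_simps)

lemma qeval_scale: "qeval P (t * x) (t * y) = t\<^sup>2 * qeval P x y"
  by (cases P) (simp add: qeval_def power2_eq_square algebra_simps)

lemma form_act_scale: "form_act P M (t * x) (t * y) = t\<^sup>2 * form_act P M x y"
proof -
  have "mat_vec M (t * x, t * y) = (t * fst (mat_vec M (x, y)), t * snd (mat_vec M (x, y)))"
    by (cases M) (simp add: mat_vec_def algebra_simps)
  then show ?thesis by (simp add: form_act_def qeval_scale case_prod_beta)
qed

lemma stab_Gamma0_eq_conj_diag_image:
  fixes P P' :: qform
  assumes d: "d > 0" and scale: "\<And>u v. qeval P u (d * v) = d * qeval P' u v"
  shows "stab (Gamma0 (d * k)) P = conj_diag d ` stab (Gamma00 k d) P'"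
proof
  show "conj_diag d ` stab (Gamma00 k d) P' \<subseteq> stab (Gamma0 (d * k)) P"
  proof
    fix M0 assume "M0 \<in> conj_diag d ` stab (Gamma00 k d) P'"
    then obtain \<alpha> \<beta> \<gamma> \<delta> where M0: "M0 = conj_diag d (\<alpha>, \<beta>, \<gamma>, \<delta>)"
      and M: "(\<alpha>, \<beta>, \<gamma>, \<delta>) \<in> stab (Gamma00 k d) P'" by auto
    have det: "\<alpha> * \<delta> - \<beta> * \<gamma> = 1" and "k dvd \<gamma>" "d dvd \<beta>"
      and fix_P': "form_act P' (\<alpha>, \<beta>, \<gamma>, \<delta>) = qeval P'"
      using M by (auto simp: stab_def Gamma00_def Gamma0_def mdet_def)
    then obtain \<beta>' where \<beta>: "\<beta> = d * \<beta>'" by auto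
    txt \<open>Both forms are only compared on vectors \<open>(x, d y)\<close>; homogeneity recovers the rest.\<close>
    have "d\<^sup>2 * form_act P M0 x y = d\<^sup>2 * qeval P x y" for x y
    proof -
      have "d\<^sup>2 * form_act P M0 x y = form_act P M0 (d * x) (d * y)"
        by (simp add: form_act_scale)
      also have "\<dots> = d * form_act P' (\<alpha>, \<beta>, \<gamma>, \<delta>) (d * x) y"
        using \<open>d dvd \<beta>\<close> by (simp add: M0 form_act_def mat_vec_conj_diag case_prod_beta scale)
      also have "\<dots> = qeval P (d * x) (d * y)" by (simp add: fix_P' scale)
      finally show ?thesis by (simp add: qeval_scale)
    qed
    then have "form_act P M0 = qeval P" using d by (simp add: fun_eq_iff)
    moreover have "mdet M0 = 1" "d * k dvd d * \<gamma>"
      using det d \<open>k dvd \<gamma>\<close> by (simp_all add: M0 \<beta> conj_diag_def mdet_def algebra_simps)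
    ultimately show "M0 \<in> stab (Gamma0 (d * k)) P"
      by (simp add: stab_def Gamma0_def M0 conj_diag_def)
  qed
next
  show "stab (Gamma0 (d * k)) P \<subseteq> conj_diag d ` stab (Gamma00 k d) P'"
  proof
    fix M assume "M \<in> stab (Gamma0 (d * k)) P"
    then obtain \<alpha> \<beta> \<gamma> \<delta> where M: "M = (\<alpha>, \<beta>, \<gamma>, \<delta>)" and det: "\<alpha> * \<delta> - \<beta> * \<gamma> = 1"
      and "d * k dvd \<gamma>" and fix_P: "form_act P M = qeval P"
      by (cases M) (auto simp: stab_def Gamma0_def mdet_def)
    then obtain \<gamma>' where \<gamma>: "\<gamma> = d * \<gamma>'" and "k dvd \<gamma>'"
      using d by (metis dvd_mult_cancel_left dvd_mult_left dvd_def less_irrefl)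
    define M' where "M' = (\<alpha>, d * \<beta>, \<gamma>', \<delta>)"
    have conj: "conj_diag d M' = M" using d by (simp add: M \<gamma> M'_def conj_diag_def)
    have "d * form_act P' M' x y = d * qeval P' x y" for x y
    proof -
      have "d * form_act P' M' x y = case_prod (qeval P) (mat_vec (conj_diag d M') (x, d * y))"
        by (simp add: form_act_def M'_def mat_vec_conj_diag case_prod_beta scale)
      also have "\<dots> = form_act P M x (d * y)" by (simp add: conj form_act_def)
      also have "\<dots> = d * qeval P' x y" by (simp add: fix_P scale)
      finally show ?thesis .
    qed
    then have "form_act P' M' = qeval P'" using d by (simp add: fun_eq_iff)
    moreover have "mdet M' = 1" using det by (simp add: M'_def \<gamma> mdet_def algebra_simps)
    ultimately have "M' \<in> stab (Gamma00 k d) P'"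
      using \<open>k dvd \<gamma>'\<close> by (simp add: stab_def Gamma00_def Gamma0_def M'_def)
    then show "M \<in> conj_diag d ` stab (Gamma00 k d) P'" using conj by blast
  qed
qed

lemma orbit_conj_diag_image:
  assumes "H \<subseteq> Gamma00 k d"
  shows "orbit (conj_diag d ` H) ((\<lambda>(u, v). (u, d * v)) w)
    = (\<lambda>(u, v). (u, d * v)) ` orbit H w"
proof -
  have "mat_vec (conj_diag d M) ((\<lambda>(u, v). (u, d * v)) w) = (\<lambda>(u, v). (u, d * v)) (mat_vec M w)"
    if "M \<in> H" for M
    using that assms by (cases M; cases w) (auto simp: Gamma00_def mat_vec_conj_diag)
  then show ?thesis unfolding orbit_def image_image by (rule image_cong[OF refl])
qed

lemma gcd_eq_left_factor_iff:
  fixes d k v :: int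
  assumes "d > 0"
  shows "gcd v (d * k) = d \<longleftrightarrow> (\<exists>v'. v = d * v' \<and> gcd v' k = 1)"
proof
  assume "gcd v (d * k) = d"
  then obtain v' where v: "v = d * v'" by (metis gcd_dvd1 dvd_def)
  then have "d * gcd v' k = d * 1"
    using \<open>gcd v (d * k) = d\<close> assms by (simp add: gcd_mult_distrib_int[symmetric])
  then show "\<exists>v'. v = d * v' \<and> gcd v' k = 1" using v assms by auto
next
  assume "\<exists>v'. v = d * v' \<and> gcd v' k = 1"
  then show "gcd v (d * k) = d" using assms by (auto simp: gcd_mult_distrib_int[symmetric])
qed

lemma positive_values_gcd_set_eq_image:
  fixes P P' :: qform
  assumes d: "d > 0" and scale: "\<And>u v. qeval P u (d * v) = d * qeval P' u v"
  shows "{(u, v). qeval P u v > 0 \<and> gcd v (d * k) = d}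
    = (\<lambda>(u, v). (u, d * v)) ` {(u, v). qeval P' u v > 0 \<and> gcd v k = 1}"
  using d by (auto simp: gcd_eq_left_factor_iff scale zero_less_mult_iff image_iff)

theorem lemma6p3:
  fixes N D a b c d :: int
  assumes "N \<ge> 1" and "D > 0" and "fundamental_discriminant D"
    and "D mod (4 * N) = 1 mod (4 * N)"
    and "(N * a, b, c) \<in> QMD1 N D"
    and "d > 0" and "d dvd N"
  shows "let Q = (N * a, b, c); Qd = ((N div d) * a, b, c * d);
             H1 = stab (Gamma00 (N div d) d) Qd; H2 = stab (Gamma0 N) Q;
             A1 = {(u, v). qeval Qd u v > 0 \<and> gcd v (N div d) = 1};
             A2 = {(u, v). qeval Q u v > 0 \<and> gcd v N = d};
             \<phi> = (\<lambda>(u::int, v::int). (u, d * v))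
         in (\<forall>x\<in>A1. \<forall>y\<in>A1. orbit H1 x = orbit H1 y \<longrightarrow> orbit H2 (\<phi> x) = orbit H2 (\<phi> y))
            \<and> bij_betw (\<lambda>Orb. orbit H2 (\<phi> (SOME x. x \<in> Orb)))
                (orbit H1 ` A1) (orbit H2 ` A2)"
proof -
  obtain k where N: "N = d * k" using \<open>d dvd N\<close> by blast
  have k: "N div d = k" using N \<open>d > 0\<close> by simp
  let ?\<phi> = "\<lambda>(u::int, v::int). (u, d * v)"
  have scale: "qeval (d * k * a, b, c) u (d * v) = d * qeval (k * a, b, c * d) u v" for u v
    by (simp add: qeval_def power2_eq_square algebra_simps)
  have "inj ?\<phi>" using \<open>d > 0\<close> by (auto simp: inj_def)
  moreover have "orbit (stab (Gamma0 (d * k)) (d * k * a, b, c)) (?\<phi> w)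
      = ?\<phi> ` orbit (stab (Gamma00 k d) (k * a, b, c * d)) w" for w
    unfolding stab_Gamma0_eq_conj_diag_image[OF \<open>d > 0\<close> scale]
    by (rule orbit_conj_diag_image) (auto simp: stab_def)
  ultimately show ?thesis
    unfolding Let_def k unfolding N
    by (rule bij_betw_orbit_classes[OF mat_subgroup_stab[OF mat_subgroup_Gamma00]])
      (rule positive_values_gcd_set_eq_image[OF \<open>d > 0\<close> scale])
qed

end
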